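(* Consider the partial-block protocol described in the context, on a finite set of agents $A$ with a connected undirected connectivity graph $G=(A,E)$, and suppose the block length is $L=|A|$. Then a deadlock never occurs: for every epoch $t$ it is not the case that $D(i)$ holds for all $i\in A$.
   Context: Let $A$ be a finite set of agents (agent IDs) and $G=(A,E)$ a connected undirected graph; $\Gamma_i$ denotes the set of neighbors of $i$. Fix an integer $L\ge 1$ (block length). Each agent $i$ maintains a partial block $pb_i\subseteq A$ (a set of agent IDs). The system runs in epochs $t=0,1,2,\dots$; $pb_i^{(t)}$ is agent $i$'s partial block at the start of epoch $t$. In each epoch: (C1) every agent $i$ with $i\notin pb_i$ adds $i$ to $pb_i$; (C2) every agent $i$ sends its $pb_i$ to every neighbor $j\in\Gamma_i$. When an agent $i$ receives a partial block $P$ (from a neighbor or via a direct message) it applies the rule: (R1) if $|P\setminus\{i\}|>|pb_i\setminus\{i\}|$, agent $i$ sets $pb_i:=P$; (R2) otherwise, if $|P\setminus\{i\}|=|pb_i\setminus\{i\}|$ and $P\neq pb_i$, agent $i$ sends its current $pb_i$ directly to every agent in $P\setminus pb_i$, each of which processes it by the same rule; (R3) otherwise the received block is discarded. All received partial blocks are assumed to pass all validity and similarity checks. For an agent $i$ and epoch $t$, the predicate $D(i)$ means: $pb_i^{(t)}=pb_i^{(t+1)}$ and $|pb_i^{(t)}|<L$. A deadlock at epoch $t$ means that $D(i)$ holds for all $i\in A$. *)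

theory Defs
  imports Main "HOL-Library.Multiset"
begin

definition neighbors :: "'a set \<Rightarrow> ('a \<Rightarrow> 'a \<Rightarrow> bool) \<Rightarrow> 'a \<Rightarrow> 'a set" where
  "neighbors A E i = {j \<in> A. E i j}"

definition connected_graph :: "'a set \<Rightarrow> ('a \<Rightarrow> 'a \<Rightarrow> bool) \<Rightarrow> bool" where
  "connected_graph A E \<longleftrightarrow>
     finite A \<and> A \<noteq> {} \<and>
     (\<forall>i j. E i j \<longrightarrow> i \<in> A \<and> j \<in> A \<and> E j i \<and> i \<noteq> j) \<and>
     (\<forall>i\<in>A. \<forall>j\<in>A. E\<^sup>*\<^sup>* i j)"

(* A configuration: partial block pb i of every agent, together with the
   multiset of pending messages (recipient, partial block). *)
type_synonym 'a config = "('a \<Rightarrow> 'a set) \<times> ('a \<times> 'a set) multiset"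

definition receive :: "'a \<Rightarrow> 'a set \<Rightarrow> 'a config \<Rightarrow> 'a config" where
  "receive j P c =
     (let pb = fst c; M = snd c - {#(j, P)#} in
      if card (P - {j}) > card (pb j - {j}) then (pb(j := P), M)                        \<comment> \<open>R1\<close>
      else if card (P - {j}) = card (pb j - {j}) \<and> P \<noteq> pb j
        then (pb, M + image_mset (\<lambda>k. (k, pb j)) (mset_set (P - pb j)))               \<comment> \<open>R2\<close>
      else (pb, M))"                                                                  \<comment> \<open>R3\<close>

definition deliver :: "'a config \<Rightarrow> 'a config \<Rightarrow> bool" where
  "deliver c c' \<longleftrightarrow> (\<exists>j P. (j, P) \<in># snd c \<and> c' = receive j P c)"

definition add_self :: "'a set \<Rightarrow> ('a \<Rightarrow> 'a set) \<Rightarrow> ('a \<Rightarrow> 'a set)" where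
  "add_self A pb = (\<lambda>i. if i \<in> A then insert i (pb i) else pb i)"

definition initial_msgs :: "'a set \<Rightarrow> ('a \<Rightarrow> 'a \<Rightarrow> bool) \<Rightarrow> ('a \<Rightarrow> 'a set) \<Rightarrow> ('a \<times> 'a set) multiset" where
  "initial_msgs A E pb =
     image_mset (\<lambda>(i, j). (j, pb i)) (mset_set {(i, j). i \<in> A \<and> j \<in> neighbors A E i})"

(* one epoch: C1, then C2, then all messages (including direct R2 messages)
   are processed in some arbitrary order until none is pending. *)
definition epoch :: "'a set \<Rightarrow> ('a \<Rightarrow> 'a \<Rightarrow> bool) \<Rightarrow> ('a \<Rightarrow> 'a set) \<Rightarrow> ('a \<Rightarrow> 'a set) \<Rightarrow> bool" where
  "epoch A E pb pb' \<longleftrightarrow>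
     (let pb1 = add_self A pb in deliver\<^sup>*\<^sup>* (pb1, initial_msgs A E pb1) (pb', {#}))"

(* an execution: pbs t = partial blocks at the start of epoch t; initially empty *)
definition execution :: "'a set \<Rightarrow> ('a \<Rightarrow> 'a \<Rightarrow> bool) \<Rightarrow> (nat \<Rightarrow> 'a \<Rightarrow> 'a set) \<Rightarrow> bool" where
  "execution A E pbs \<longleftrightarrow> pbs 0 = (\<lambda>_. {}) \<and> (\<forall>t. epoch A E (pbs t) (pbs (Suc t)))"

definition D :: "nat \<Rightarrow> (nat \<Rightarrow> 'a \<Rightarrow> 'a set) \<Rightarrow> nat \<Rightarrow> 'a \<Rightarrow> bool" where
  "D L pbs t i \<longleftrightarrow> pbs t i = pbs (Suc t) i \<and> card (pbs t i) < L"

definition deadlock :: "'a set \<Rightarrow> nat \<Rightarrow> (nat \<Rightarrow> 'a \<Rightarrow> 'a set) \<Rightarrow> nat \<Rightarrow> bool" where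
  "deadlock A L pbs t \<longleftrightarrow> (\<forall>i\<in>A. D L pbs t i)"

end

theory Submission
  imports Defs
begin

text \<open>
  The quantity card (pb x - {x}) never decreases while messages are delivered, and it strictly
  increases whenever pb x changes. Step C1 only inserts x itself, so in an epoch that leaves every
  partial block unchanged no block changes at any moment of the epoch, and every agent already
  contains itself. Consequently no message ever triggers R1. Applied to the C2 messages in both
  directions of an edge i--j this forces card (pb i) = card (pb j) and j \<in> pb i; if moreover
  pb i \<noteq> pb j, rule R2 sends pb j to some k \<in> pb i - pb j, and there it would trigger R1. Hence
  neighbours hold equal blocks, by connectivity all agents hold the same block, and it contains
  every agent. With L = card A this block has length L, so not all agents can satisfy D.
\<close>

lemma connected_graph_propagate:
  assumes "connected_graph A E"
    and edge: "\<And>i j. E i j \<Longrightarrow> f i = f j"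
    and "x \<in> A" "y \<in> A"
  shows "f x = f y"
proof -
  have "E\<^sup>*\<^sup>* x y" using assms unfolding connected_graph_def by blast
  then show ?thesis by (induction rule: rtranclp_induct) (simp_all add: edge)
qed

definition wf_config :: "'a set \<Rightarrow> 'a config \<Rightarrow> bool" where
  "wf_config A c \<longleftrightarrow> (\<forall>x. fst c x \<subseteq> A) \<and> (\<forall>m \<in># snd c. fst m \<in> A \<and> snd m \<subseteq> A)"

lemma fst_receive:
  "fst (receive j P c) = (if card (fst c j - {j}) < card (P - {j}) then (fst c)(j := P) else fst c)"
  by (simp add: receive_def Let_def)

lemma snd_receive_forward:
  assumes "card (P - {j}) = card (fst c j - {j})" "P \<noteq> fst c j"
  shows "snd (receive j P c)
           = snd c - {#(j, P)#} + image_mset (\<lambda>k. (k, fst c j)) (mset_set (P - fst c j))"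
  using assms by (simp add: receive_def Let_def)

lemma pending_receive:
  "m \<in># snd c - {#(j, P)#} \<Longrightarrow> m \<in># snd (receive j P c)"
  by (auto simp: receive_def Let_def)

lemma pending_after_receive:
  "m \<in># snd (receive j P c) \<Longrightarrow> m \<in># snd c - {#(j, P)#} \<or> (\<exists>k \<in> P - fst c j. m = (k, fst c j))"
  by (cases "finite (P - fst c j)") (auto simp: receive_def Let_def split: if_splits)

lemma receive_wf_config:
  assumes "wf_config A c" "(j, P) \<in># snd c"
  shows "wf_config A (receive j P c)"
proof -
  have "P \<subseteq> A" "j \<in> A" "fst c j \<subseteq> A"
    using assms unfolding wf_config_def by fastforce+
  moreover have "fst m \<in> A \<and> snd m \<subseteq> A" if "m \<in># snd (receive j P c)" for m
    using pending_after_receive[OF that] assms(1) \<open>P \<subseteq> A\<close> \<open>fst c j \<subseteq> A\<close>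
    unfolding wf_config_def by (fastforce dest: in_diffD)
  ultimately show ?thesis
    using assms(1) unfolding wf_config_def fst_receive by auto
qed

lemma deliver_rtranclp_wf_config:
  "deliver\<^sup>*\<^sup>* c c' \<Longrightarrow> wf_config A c \<Longrightarrow> wf_config A c'"
  by (induction rule: rtranclp_induct) (auto simp: deliver_def receive_wf_config)

lemma finite_directed_edges:
  "finite A \<Longrightarrow> finite {(i, j). i \<in> A \<and> j \<in> neighbors A E i}"
  by (rule finite_subset[of _ "A \<times> A"]) (auto simp: neighbors_def)

lemma wf_config_epoch_start:
  assumes "finite A" "\<And>x. pb x \<subseteq> A"
  shows "wf_config A (add_self A pb, initial_msgs A E (add_self A pb))"
  using assms finite_directed_edges[OF assms(1), of E]
  by (auto simp: wf_config_def add_self_def initial_msgs_def neighbors_def)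

lemma execution_blocks_subset:
  assumes "finite A" "execution A E pbs"
  shows "pbs t x \<subseteq> A"
proof (induction t arbitrary: x)
  case 0
  then show ?case using assms(2) by (simp add: execution_def)
next
  case (Suc t)
  have "deliver\<^sup>*\<^sup>* (add_self A (pbs t), initial_msgs A E (add_self A (pbs t))) (pbs (Suc t), {#})"
    using assms(2) by (simp add: execution_def epoch_def Let_def)
  then have "wf_config A (pbs (Suc t), {#})"
    using deliver_rtranclp_wf_config wf_config_epoch_start[OF assms(1)] Suc by blast
  then show ?case by (simp add: wf_config_def)
qed

lemma deliver_block_grows:
  assumes "deliver c c'"
  shows "fst c' x = fst c x \<or> card (fst c x - {x}) < card (fst c' x - {x})"
proof -
  obtain j P where "c' = receive j P c"
    using assms unfolding deliver_def by blast
  then show ?thesis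
    by (cases "x = j") (simp_all add: fst_receive)
qed

lemma deliver_rtranclp_block_grows:
  "deliver\<^sup>*\<^sup>* c c' \<Longrightarrow> fst c' x = fst c x \<or> card (fst c x - {x}) < card (fst c' x - {x})"
proof (induction rule: rtranclp_induct)
  case base
  then show ?case by simp
next
  case (step c' c'')
  from step.IH deliver_block_grows[OF step.hyps(2), of x] show ?case
    by (elim disjE) (simp, simp, simp, meson less_trans disjI2)
qed

lemma deliver_rtranclp_receives_pending:
  assumes "deliver\<^sup>*\<^sup>* c c'" "snd c' = {#}" "(j, P) \<in># snd c"
  shows "\<exists>c1. deliver\<^sup>*\<^sup>* c c1 \<and> (j, P) \<in># snd c1 \<and> deliver\<^sup>*\<^sup>* (receive j P c1) c'"
  using assms
proof (induction rule: converse_rtranclp_induct)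
  case base
  then show ?case by simp
next
  case (step c c2)
  then obtain j' P' where step_msg: "(j', P') \<in># snd c" "c2 = receive j' P' c"
    unfolding deliver_def by blast
  show ?case
  proof (cases "(j, P) = (j', P')")
    case True
    then show ?thesis using step step_msg by blast
  next
    case False
    then have "(j, P) \<in># snd c - {#(j', P')#}"
      using step.prems(2) by (auto simp: in_diff_count)
    then have "(j, P) \<in># snd c2"
      using step_msg(2) by (simp add: pending_receive)
    then show ?thesis
      using step.IH step.prems(1) step.hyps(1) by (meson converse_rtranclp_into_rtranclp)
  qed
qed

locale stationary_epoch =
  fixes A :: "'a set" and E :: "'a \<Rightarrow> 'a \<Rightarrow> bool" and pb pb' :: "'a \<Rightarrow> 'a set"
  assumes graph: "connected_graph A E"
    and blocks_subset: "\<And>x. pb x \<subseteq> A"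
    and epoch: "epoch A E pb pb'"
    and stationary: "\<And>x. x \<in> A \<Longrightarrow> pb' x = pb x"
begin

definition start :: "'a config" where
  "start = (add_self A pb, initial_msgs A E (add_self A pb))"

definition intermediate :: "'a config \<Rightarrow> bool" where
  "intermediate c \<longleftrightarrow> deliver\<^sup>*\<^sup>* start c \<and> deliver\<^sup>*\<^sup>* c (pb', {#})"

lemma finite_A: "finite A"
  using graph by (simp add: connected_graph_def)

lemma edge_in_A: "E i j \<Longrightarrow> i \<in> A \<and> j \<in> A \<and> E j i"
  using graph by (simp add: connected_graph_def)

lemma finite_block: "finite (pb x)"
  using blocks_subset finite_A by (rule finite_subset)

lemma intermediate_start: "intermediate start"
  using epoch by (simp add: intermediate_def start_def epoch_def Let_def)

lemma intermediate_wf_config: "intermediate c \<Longrightarrow> wf_config A c"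
  using deliver_rtranclp_wf_config wf_config_epoch_start[OF finite_A blocks_subset]
  by (fastforce simp: intermediate_def start_def finite_A)

lemma start_block: "x \<in> A \<Longrightarrow> fst start x = insert x (pb x)"
  by (simp add: start_def add_self_def)

lemma self_mem_block:
  assumes "x \<in> A"
  shows "x \<in> pb x"
proof -
  have "card (fst start x - {x}) = card (pb' x - {x})"
    using start_block[OF assms] stationary[OF assms] by simp
  then have "pb' x = fst start x"
    using deliver_rtranclp_block_grows[of start "(pb', {#})" x] intermediate_start
    by (auto simp: intermediate_def)
  then show ?thesis
    using start_block[OF assms] stationary[OF assms] by auto
qed

lemma intermediate_block_eq:
  assumes "intermediate c" "x \<in> A"
  shows "fst c x = pb x"
proof -
  have "fst start x = pb x" "pb' x = pb x"
    using start_block self_mem_block stationary assms(2) by auto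
  then show ?thesis
    using deliver_rtranclp_block_grows[of start c x] deliver_rtranclp_block_grows[of c "(pb', {#})" x]
      assms(1) by (auto simp: intermediate_def)
qed

lemma intermediate_received:
  assumes "intermediate c" "(j, P) \<in># snd c"
  obtains c1 where "intermediate c1" "(j, P) \<in># snd c1" "intermediate (receive j P c1)"
proof -
  have start_c: "deliver\<^sup>*\<^sup>* start c" and c_end: "deliver\<^sup>*\<^sup>* c (pb', {#})"
    using assms(1) by (simp_all add: intermediate_def)
  obtain c1 where c1: "deliver\<^sup>*\<^sup>* c c1" "(j, P) \<in># snd c1" "deliver\<^sup>*\<^sup>* (receive j P c1) (pb', {#})"
    using deliver_rtranclp_receives_pending[OF c_end snd_conv assms(2)] by (elim exE conjE)
  have start_c1: "deliver\<^sup>*\<^sup>* start c1"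
    using start_c c1(1) by (rule rtranclp_trans)
  have "deliver c1 (receive j P c1)"
    using c1(2) unfolding deliver_def by blast
  then have "deliver\<^sup>*\<^sup>* start (receive j P c1)" "deliver\<^sup>*\<^sup>* c1 (pb', {#})"
    using start_c1 c1(3) by (auto intro: rtranclp.rtrancl_into_rtrancl converse_rtranclp_into_rtranclp)
  then show ?thesis
    using that start_c1 c1 unfolding intermediate_def by blast
qed

lemma pending_not_larger:
  assumes "intermediate c" "(j, P) \<in># snd c"
  shows "card (P - {j}) \<le> card (pb j - {j})"
proof (rule ccontr)
  assume larger: "\<not> ?thesis"
  obtain c1 where c1: "intermediate c1" "(j, P) \<in># snd c1" "intermediate (receive j P c1)"
    using intermediate_received assms .
  have "j \<in> A"
    using intermediate_wf_config[OF c1(1)] c1(2) by (fastforce simp: wf_config_def)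
  then have "fst (receive j P c1) j = P"
    using larger intermediate_block_eq[OF c1(1)] by (simp add: fst_receive)
  moreover have "fst (receive j P c1) j = pb j"
    using intermediate_block_eq[OF c1(3) \<open>j \<in> A\<close>] .
  ultimately show False
    using larger by simp
qed

lemma pending_forwarded:
  assumes "intermediate c" "(j, P) \<in># snd c"
    and "card (P - {j}) = card (pb j - {j})" "k \<in> P - pb j"
  shows "\<exists>c'. intermediate c' \<and> (k, pb j) \<in># snd c'"
proof -
  obtain c1 where c1: "intermediate c1" "(j, P) \<in># snd c1" "intermediate (receive j P c1)"
    using intermediate_received assms(1,2) .
  have "j \<in> A" "P \<subseteq> A"
    using intermediate_wf_config[OF c1(1)] c1(2) by (fastforce simp: wf_config_def)+
  then have "finite (P - pb j)"
    using finite_A by (meson finite_Diff finite_subset)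
  moreover have "fst c1 j = pb j"
    using intermediate_block_eq[OF c1(1) \<open>j \<in> A\<close>] .
  moreover have "P \<noteq> pb j"
    using assms(4) by blast
  ultimately have "(k, pb j) \<in># snd (receive j P c1)"
    using assms(3,4) by (simp add: snd_receive_forward)
  then show ?thesis
    using c1(3) by blast
qed

lemma initial_msg_pending: "E i j \<Longrightarrow> (j, pb i) \<in># snd start"
  using edge_in_A[of i j] self_mem_block[of i]
    finite_directed_edges[OF finite_A, of E]
  by (force simp: start_def initial_msgs_def add_self_def neighbors_def)

lemma edge_card_eq:
  assumes "E i j"
  shows "card (pb i) = card (pb j)" and "j \<in> pb i"
proof -
  have "i \<in> A" "j \<in> A" "E j i"
    using edge_in_A[OF assms] by auto
  then have "i \<in> pb i" "j \<in> pb j"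
    using self_mem_block by auto
  moreover have "card (pb i - {j}) \<le> card (pb j - {j})" "card (pb j - {i}) \<le> card (pb i - {i})"
    using pending_not_larger[OF intermediate_start] initial_msg_pending assms \<open>E j i\<close> by blast+
  moreover have "0 < card (pb i)" "0 < card (pb j)"
    using calculation(1,2) finite_block card_gt_0_iff by blast+
  ultimately show "card (pb i) = card (pb j)" "j \<in> pb i"
    using finite_block[of i] finite_block[of j]
    by (auto simp: card_Diff_singleton_if split: if_splits)
qed

lemma edge_block_eq:
  assumes "E i j"
  shows "pb i = pb j"
proof (rule ccontr)
  assume "pb i \<noteq> pb j"
  moreover have "card (pb i) = card (pb j)"
    using edge_card_eq(1)[OF assms] .
  ultimately obtain k where k: "k \<in> pb i - pb j"
    using card_subset_eq[OF finite_block] by blast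
  have "j \<in> A" "j \<in> pb j"
    using edge_in_A[OF assms] self_mem_block by auto
  then have "card (pb i - {j}) = card (pb j - {j})"
    using edge_card_eq[OF assms] finite_block by simp
  then obtain c' where c': "intermediate c'" "(k, pb j) \<in># snd c'"
    using pending_forwarded[OF intermediate_start initial_msg_pending[OF assms]] k by blast
  have "k \<in> A"
    using k blocks_subset by blast
  have "k \<in> pb k"
    using self_mem_block[OF \<open>k \<in> A\<close>] .
  have "card (pb k) = card (pb j)"
    using connected_graph_propagate[OF graph edge_card_eq(1) \<open>k \<in> A\<close> \<open>j \<in> A\<close>] .
  have "card (pb j) = card (pb j - {k})"
    using k by simp
  also have "\<dots> \<le> card (pb k - {k})"
    using c' by (rule pending_not_larger)
  also have "\<dots> < card (pb k)"
    using finite_block \<open>k \<in> pb k\<close> by (rule card_Diff1_less)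
  also have "\<dots> = card (pb j)"
    by fact
  finally show False
    by simp
qed

theorem block_eq_agents:
  assumes "x \<in> A"
  shows "pb x = A"
proof -
  have "y \<in> pb x" if "y \<in> A" for y
  proof -
    have "pb y = pb x"
      using connected_graph_propagate[OF graph edge_block_eq that assms] .
    then show ?thesis
      using self_mem_block[OF that] by simp
  qed
  then show ?thesis
    using blocks_subset by blast
qed

end

theorem theorem1:
  fixes A :: "'a set" and E :: "'a \<Rightarrow> 'a \<Rightarrow> bool" and pbs :: "nat \<Rightarrow> 'a \<Rightarrow> 'a set"
  assumes "connected_graph A E"
    and "L = card A"
    and "execution A E pbs"
  shows "\<not> deadlock A L pbs t"
proof
  assume deadlock: "deadlock A L pbs t"
  have "finite A" "A \<noteq> {}"
    using assms(1) by (auto simp: connected_graph_def)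
  have "stationary_epoch A E (pbs t) (pbs (Suc t))"
  proof
    show "epoch A E (pbs t) (pbs (Suc t))"
      using assms(3) by (simp add: execution_def)
  qed (use assms deadlock execution_blocks_subset[OF \<open>finite A\<close>]
         in \<open>auto simp: deadlock_def D_def\<close>)
  moreover obtain a where "a \<in> A"
    using \<open>A \<noteq> {}\<close> by blast
  ultimately have "pbs t a = A"
    by (rule stationary_epoch.block_eq_agents)
  moreover have "card (pbs t a) < L"
    using deadlock \<open>a \<in> A\<close> unfolding deadlock_def D_def by blast
  ultimately show False
    using assms(2) by simp
qed

end
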